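(* Let $\mathcal{A}$ be an automaton over $\Sigma$. Then there exists an automaton $\mathcal{B}$ over $\Sigma$ such that $\mathfrak{J}_{\exists\boxplus}(\mathcal{B})=\mathfrak{J}(\mathcal{A})$.
   Context: Automata are nondeterministic B\"uchi automata over infinite words; $\mathfrak{L}(\mathcal{A})$ is the accepted language. For $w\in\Sigma^\omega$, $\Psi(w)\in\mathbb{N}_\infty^\Sigma$ gives the number of occurrences of each letter ($\infty$ if infinite); for finite $x$, $\Psi(x)\in\mathbb{N}^\Sigma$. $w\sim w'$ iff $\Psi(w)=\Psi(w')$; $\mathfrak{J}(\mathcal{A})=\{w:\exists w'\sim w,\ w'\in\mathfrak{L}(\mathcal{A})\}$. For $k\ge1$, $w\sim_{k\boxplus}w'$ means $w=x_1x_2\cdots$, $w'=y_1y_2\cdots$ with $|x_i|=|y_i|=k$ and $\Psi(x_i)=\Psi(y_i)$. $\mathfrak{J}_{\exists\boxplus}(\mathcal{A})=\{w\in\Sigma^\omega:\exists k\ge1\ \exists w'\sim_{k\boxplus}w,\ w'\in\mathfrak{L}(\mathcal{A})\}$. *)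

theory Defs
  imports Main "HOL-Library.Extended_Nat"
begin

record ('q, 'a) nba =
  alphabet :: "'a set"
  states :: "'q set"
  initial :: "'q set"
  trans :: "('q \<times> 'a \<times> 'q) set"
  accepting :: "'q set"

definition nba_wf :: "('q, 'a) nba \<Rightarrow> bool" where
  "nba_wf A \<longleftrightarrow> finite (alphabet A) \<and> finite (states A) \<and>
     initial A \<subseteq> states A \<and> accepting A \<subseteq> states A \<and>
     trans A \<subseteq> states A \<times> alphabet A \<times> states A"

definition omega_words :: "'a set \<Rightarrow> (nat \<Rightarrow> 'a) set" where
  "omega_words S = {w. \<forall>i. w i \<in> S}"

definition nba_lang :: "('q, 'a) nba \<Rightarrow> (nat \<Rightarrow> 'a) set" where
  "nba_lang A = {w. w \<in> omega_words (alphabet A) \<and>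
     (\<exists>r. r 0 \<in> initial A \<and> (\<forall>i. (r i, w i, r (Suc i)) \<in> trans A) \<and>
          infinite {i. r i \<in> accepting A})}"

definition parikh_inf :: "(nat \<Rightarrow> 'a) \<Rightarrow> 'a \<Rightarrow> enat" where
  "parikh_inf w a = (if finite {i. w i = a} then enat (card {i. w i = a}) else \<infinity>)"

definition parikh_fin :: "'a list \<Rightarrow> 'a \<Rightarrow> nat" where
  "parikh_fin x a = count_list x a"

definition block :: "nat \<Rightarrow> (nat \<Rightarrow> 'a) \<Rightarrow> nat \<Rightarrow> 'a list" where
  "block k w i = map w [i * k..<(Suc i) * k]"

definition block_equiv :: "nat \<Rightarrow> (nat \<Rightarrow> 'a) \<Rightarrow> (nat \<Rightarrow> 'a) \<Rightarrow> bool" where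
  "block_equiv k w w' \<longleftrightarrow> (\<forall>i. parikh_fin (block k w i) = parikh_fin (block k w' i))"

definition J :: "('q, 'a) nba \<Rightarrow> (nat \<Rightarrow> 'a) set" where
  "J A = {w \<in> omega_words (alphabet A). \<exists>w'. parikh_inf w' = parikh_inf w \<and> w' \<in> nba_lang A}"

definition J_ex_box :: "('q, 'a) nba \<Rightarrow> (nat \<Rightarrow> 'a) set" where
  "J_ex_box A = {w \<in> omega_words (alphabet A).
     \<exists>k\<ge>1. \<exists>w'. block_equiv k w w' \<and> w' \<in> nba_lang A}"

end

theory Submission
  imports Defs "HOL-Library.Multiset"
begin

text \<open>
  The automaton \<open>lasso_nba A\<close> simulates \<open>A\<close> until \<open>A\<close> is in an accepting state lying on a
  cycle whose labels form a set \<open>I\<close>; it then guesses \<open>I\<close> and accepts every continuation over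
  \<open>I\<close> in which each letter of \<open>I\<close> occurs infinitely often, remembering the letters of \<open>I\<close>
  read since the last time all of them were seen.  Such a word has the Parikh image of a
  lasso word \<open>x y\<^sup>\<omega>\<close> accepted by \<open>A\<close> (\<open>x\<close> its prefix, \<open>y\<close> the label of the cycle), and
  block equivalence preserves Parikh images; hence \<open>J_ex_box (lasso_nba A) \<subseteq> J A\<close>.

  Conversely, let \<open>w\<close> have the Parikh image of a word \<open>u\<close> accepted by \<open>A\<close>, and let \<open>I\<close> be
  the set of letters occurring infinitely often in \<open>u\<close>, equivalently in \<open>w\<close>.  An accepting
  state visited twice after the last rare letter of \<open>u\<close>, with all of \<open>I\<close> read in between,
  gives such a cycle.  Permuting a long enough first block of \<open>w\<close> so that it starts with the
  prefix of \<open>u\<close> before the cycle yields a word block equivalent to \<open>w\<close> that is accepted by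
  \<open>lasso_nba A\<close>.
\<close>

section \<open>Occurrences of letters\<close>

lemma finite_shift_iff: "finite {j. P (n + j)} \<longleftrightarrow> finite {i::nat. P i}"
proof
  assume "finite {j. P (n + j)}"
  moreover have "{i. P i} \<subseteq> {..<n} \<union> (+) n ` {j. P (n + j)}"
  proof
    fix i assume "i \<in> {i. P i}"
    then show "i \<in> {..<n} \<union> (+) n ` {j. P (n + j)}"
      by (cases "i < n") (auto simp: image_iff intro!: exI[of _ "i - n"])
  qed
  ultimately show "finite {i. P i}" by (meson finite_Un finite_imageI finite_lessThan finite_subset)
next
  assume "finite {i. P i}"
  show "finite {j. P (n + j)}"
  proof (rule finite_imageD[of "(+) n"])
    show "finite ((+) n ` {j. P (n + j)})"
      using \<open>finite {i. P i}\<close> by (rule finite_subset[rotated]) auto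
  qed simp
qed

lemma finite_nat_set_eventually_not:
  assumes "finite {j::nat. P j}"
  obtains T where "\<forall>j\<ge>T. \<not> P j"
  using assms unfolding finite_nat_set_iff_bounded by (metis mem_Collect_eq not_le)

definition inf_letters :: "(nat \<Rightarrow> 'a) \<Rightarrow> 'a set" where
  "inf_letters w = {a. infinite {i. w i = a}}"

lemma occurrences_within_window:
  assumes "finite I" and "I \<subseteq> inf_letters w"
  obtains N where "\<forall>a\<in>I. \<exists>i. m \<le> i \<and> i < N \<and> w i = a"
proof -
  have "\<forall>a\<in>I. \<exists>i\<ge>m. w i = a"
    using assms(2) unfolding inf_letters_def infinite_nat_iff_unbounded_le by blast
  then obtain t where t: "\<forall>a\<in>I. m \<le> t a \<and> w (t a) = a" by metis
  have "\<forall>a\<in>I. t a < Suc (Max (t ` I))"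
    using assms(1) by (simp add: le_imp_less_Suc)
  with t show thesis by (intro that) blast
qed

lemma infinite_imp_card_prefix_ge:
  assumes "infinite {i::nat. P i}"
  obtains N where "c \<le> card {i. i < N \<and> P i}"
proof -
  obtain F where F: "F \<subseteq> {i. P i}" "finite F" "card F = c"
    using infinite_arbitrarily_large[OF assms] by blast
  define N where "N = Suc (Max (insert 0 F))"
  have "F \<subseteq> {i. i < N \<and> P i}"
    using F unfolding N_def by (auto simp: less_Suc_eq_le)
  then have "card F \<le> card {i. i < N \<and> P i}" by (intro card_mono) (auto simp: N_def)
  with F show thesis by (intro that) simp
qed

lemma inf_letters_subset:
  "w \<in> omega_words S \<Longrightarrow> inf_letters w \<subseteq> S"
  unfolding inf_letters_def omega_words_def by (auto dest: not_finite_existsD)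

lemma finite_not_inf_letters:
  assumes "w \<in> omega_words S" and "finite S"
  shows "finite {i. w i \<notin> inf_letters w}"
proof -
  have "{i. w i \<notin> inf_letters w} \<subseteq> (\<Union>a\<in>S - inf_letters w. {i. w i = a})"
    using assms(1) unfolding omega_words_def by auto
  moreover have "finite (\<Union>a\<in>S - inf_letters w. {i. w i = a})"
    using assms(2) unfolding inf_letters_def by auto
  ultimately show ?thesis by (rule finite_subset)
qed

lemma inf_letters_eventually_eq:
  assumes "\<forall>i\<ge>k. u i = w i"
  shows "inf_letters u = inf_letters w"
proof -
  have "finite {i. u i = a} \<longleftrightarrow> finite {i. w i = a}" for a
    using assms finite_shift_iff[of "\<lambda>i. u i = a" k] finite_shift_iff[of "\<lambda>i. w i = a" k] by simp
  then show ?thesis unfolding inf_letters_def by simp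
qed

lemma inf_letters_shift: "inf_letters (\<lambda>j. w (m + j)) = inf_letters w"
proof -
  have "finite {j. w (m + j) = a} \<longleftrightarrow> finite {i. w i = a}" for a
    by (rule finite_shift_iff)
  then show ?thesis unfolding inf_letters_def by simp
qed

lemma inf_letters_card_prefix_ge:
  assumes "finite I" and "I \<subseteq> inf_letters w"
  obtains N where "\<forall>a\<in>I. c \<le> card {i. i < N \<and> w i = a}"
proof -
  have "\<forall>a\<in>I. \<exists>N. c \<le> card {i. i < N \<and> w i = a}"
  proof
    fix a assume "a \<in> I"
    then have "infinite {i. w i = a}" using assms(2) unfolding inf_letters_def by blast
    then obtain N where "c \<le> card {i. i < N \<and> w i = a}"
      by (rule infinite_imp_card_prefix_ge)
    then show "\<exists>N. c \<le> card {i. i < N \<and> w i = a}" ..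
  qed
  from bchoice[OF this] obtain N where N: "\<forall>a\<in>I. c \<le> card {i. i < N a \<and> w i = a}" by blast
  have "card {i. i < N a \<and> w i = a} \<le> card {i. i < Max (N ` I) \<and> w i = a}" if "a \<in> I" for a
    using assms(1) that by (intro card_mono) (auto intro: less_le_trans)
  with N show thesis using that by (meson le_trans)
qed

lemma parikh_inf_eq_infinity_iff: "parikh_inf w a = \<infinity> \<longleftrightarrow> a \<in> inf_letters w"
  unfolding parikh_inf_def inf_letters_def by simp

lemma parikh_inf_eqD:
  assumes "parikh_inf u = parikh_inf w"
  shows "inf_letters u = inf_letters w"
    and "a \<notin> inf_letters w \<Longrightarrow> card {i. u i = a} = card {i. w i = a}"
proof -
  show "inf_letters u = inf_letters w"
    using assms by (auto simp: parikh_inf_eq_infinity_iff[symmetric])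
  assume "a \<notin> inf_letters w"
  then show "card {i. u i = a} = card {i. w i = a}"
    using fun_cong[OF assms, of a] \<open>inf_letters u = inf_letters w\<close>
    unfolding parikh_inf_def inf_letters_def by (simp split: if_splits)
qed

lemma parikh_inf_eq_if_same_prefix:
  assumes "\<forall>i<m. u i = w i" and "\<forall>i\<ge>m. u i \<in> I" and "\<forall>i\<ge>m. w i \<in> I"
    and "I \<subseteq> inf_letters u" and "I \<subseteq> inf_letters w"
  shows "parikh_inf u = parikh_inf w"
proof
  fix a
  show "parikh_inf u a = parikh_inf w a"
  proof (cases "a \<in> I")
    case True
    then show ?thesis using assms(4,5) parikh_inf_eq_infinity_iff by (metis subsetD)
  next
    case False
    then have "{i. u i = a} = {i. w i = a}"
      using assms(1-3) by (metis not_le)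
    then show ?thesis unfolding parikh_inf_def by simp
  qed
qed

lemma count_list_map_upt: "count_list (map w [0..<n]) a = card {i. i < n \<and> w i = a}"
proof (induction n)
  case (Suc n)
  have "{i. i < Suc n \<and> w i = a} =
      (if w n = a then insert n {i. i < n \<and> w i = a} else {i. i < n \<and> w i = a})"
    by (auto simp: less_Suc_eq)
  with Suc show ?case by simp
qed simp

section \<open>Block equivalence\<close>

lemma count_list_map_upt_blocks:
  "count_list (map w [0..<n * k]) a = (\<Sum>i<n. count_list (block k w i) a)"
proof (induction n)
  case (Suc n)
  have "[0..<Suc n * k] = [0..<n * k] @ [n * k..<Suc n * k]"
    using upt_add_eq_append[of 0 "n * k" k] by (simp add: add.commute)
  with Suc show ?case by (simp add: block_def)
qed simp

lemma block_equiv_card_prefix: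
  assumes "block_equiv k w w'"
  shows "card {i. i < n * k \<and> w i = a} = card {i. i < n * k \<and> w' i = a}"
  using assms unfolding block_equiv_def parikh_fin_def
  by (simp add: count_list_map_upt[symmetric] count_list_map_upt_blocks)

lemma block_equiv_finite_occurrences:
  assumes k: "k \<ge> 1" and eqv: "block_equiv k w w'" and fin: "finite {i. w i = a}"
  shows "finite {i. w' i = a} \<and> card {i. w' i = a} = card {i. w i = a}"
proof -
  let ?S = "{i. w i = a}" and ?S' = "{i. w' i = a}"
  have prefix_le: "card {i. i < N \<and> P i} \<le> card {i. i < N * k \<and> P i}" for N P
    using k by (intro card_mono) (auto intro: less_le_trans)
  have fin': "finite ?S'"
  proof (rule ccontr)
    assume "infinite ?S'"
    then obtain N where N: "Suc (card ?S) \<le> card {i. i < N \<and> w' i = a}"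
      by (rule infinite_imp_card_prefix_ge)
    also have "\<dots> \<le> card {i. i < N * k \<and> w' i = a}" by (rule prefix_le)
    also have "\<dots> = card {i. i < N * k \<and> w i = a}"
      using block_equiv_card_prefix[OF eqv] by simp
    also have "\<dots> \<le> card ?S" using fin by (intro card_mono) auto
    finally show False by simp
  qed
  obtain N where N: "\<forall>i\<in>?S \<union> ?S'. i < N"
    using fin fin' by (metis finite_Un finite_nat_set_iff_bounded)
  then have "\<forall>i\<in>?S \<union> ?S'. i < N * k"
    using k by (auto intro: less_le_trans)
  then have "{i. i < N * k \<and> w i = a} = ?S" "{i. i < N * k \<and> w' i = a} = ?S'"
    by auto
  then show ?thesis using block_equiv_card_prefix[OF eqv, of N a] fin' by simp
qed

lemma block_equiv_sym: "block_equiv k w w' \<Longrightarrow> block_equiv k w' w"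
  unfolding block_equiv_def by simp

lemma block_equiv_parikh_inf:
  assumes "k \<ge> 1" and "block_equiv k w w'"
  shows "parikh_inf w = parikh_inf w'"
proof
  fix a
  show "parikh_inf w a = parikh_inf w' a"
  proof (cases "finite {i. w i = a}")
    case True
    then show ?thesis
      using block_equiv_finite_occurrences[OF assms True] unfolding parikh_inf_def by simp
  next
    case False
    then have "infinite {i. w' i = a}"
      using block_equiv_finite_occurrences[OF assms(1) block_equiv_sym[OF assms(2)]] by blast
    with False show ?thesis unfolding parikh_inf_def by simp
  qed
qed

lemma block_covering_prefix:
  assumes "finite I" and "I \<subseteq> inf_letters w" and "finite {i. w i \<notin> I}"
    and rare: "\<forall>a. a \<notin> I \<longrightarrow> count_list x a = card {i. w i = a}"
  obtains k where "k \<ge> 1" and "mset x \<subseteq># mset (map w [0..<k])" and "\<forall>i\<ge>k. w i \<in> I"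
    and "\<forall>a. a \<notin> I \<longrightarrow> count_list (map w [0..<k]) a = count_list x a"
proof -
  obtain N0 where N0: "\<forall>i\<ge>N0. w i \<in> I"
    using finite_nat_set_eventually_not[OF assms(3)] by auto
  obtain N where N: "\<forall>a\<in>I. length x \<le> card {i. i < N \<and> w i = a}"
    using inf_letters_card_prefix_ge[OF assms(1,2)] .
  define k where "k = Suc (N0 + N)"
  have rare_k: "count_list (map w [0..<k]) a = count_list x a" if "a \<notin> I" for a
  proof -
    have "{i. w i = a} = {i. i < k \<and> w i = a}"
      using N0 that unfolding k_def by (auto simp: not_le[symmetric])
    then show ?thesis using rare that by (simp add: count_list_map_upt)
  qed
  have "count_list x a \<le> count_list (map w [0..<k]) a" for a
  proof (cases "a \<in> I")
    case True
    have "count_list x a \<le> length x" by (rule count_le_length)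
    also have "\<dots> \<le> card {i. i < N \<and> w i = a}" using N True by blast
    also have "\<dots> \<le> card {i. i < k \<and> w i = a}"
      unfolding k_def by (intro card_mono) auto
    finally show ?thesis by (simp add: count_list_map_upt)
  qed (simp add: rare_k)
  then have "mset x \<subseteq># mset (map w [0..<k])"
    unfolding subseteq_mset_def count_mset by blast
  moreover have "\<forall>i\<ge>k. w i \<in> I" using N0 unfolding k_def by simp
  moreover have "k \<ge> 1" unfolding k_def by simp
  ultimately show thesis using that rare_k by blast
qed

lemma block_equiv_permute_first_block:
  assumes "mset L = mset (map w [0..<k])"
  shows "block_equiv k w (\<lambda>i. if i < k then L ! i else w i)"
  unfolding block_equiv_def
proof
  fix i
  let ?w' = "\<lambda>i. if i < k then L ! i else w i"
  have "length L = k" using mset_eq_length[OF assms] by simp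
  show "parikh_fin (block k w i) = parikh_fin (block k ?w' i)"
  proof (cases "i = 0")
    case True
    have "block k ?w' i = L"
      unfolding block_def True by (rule nth_equalityI) (auto simp: \<open>length L = k\<close>)
    then show ?thesis
      using assms unfolding parikh_fin_def block_def True by (simp flip: count_mset)
  next
    case False
    then have "k \<le> i * k" by simp
    then have "\<not> j < k" if "i * k \<le> j" for j using that by linarith
    then have "block k ?w' i = block k w i"
      unfolding block_def by (intro map_cong) auto
    then show ?thesis by simp
  qed
qed

lemma block_rearrangement:
  assumes w: "w \<in> omega_words S" and "finite I" and occ: "I \<subseteq> inf_letters w"
    and "finite {i. w i \<notin> I}"
    and rare: "\<forall>a. a \<notin> I \<longrightarrow> count_list x a = card {i. w i = a}"
  obtains k w' where "k \<ge> 1" and "block_equiv k w w'" and "\<forall>i<length x. w' i = x ! i"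
    and "\<forall>i\<ge>length x. w' i \<in> I" and "I \<subseteq> inf_letters w'" and "w' \<in> omega_words S"
proof -
  obtain k where "k \<ge> 1" and sub: "mset x \<subseteq># mset (map w [0..<k])" and tail: "\<forall>i\<ge>k. w i \<in> I"
    and rare_k: "\<forall>a. a \<notin> I \<longrightarrow> count_list (map w [0..<k]) a = count_list x a"
    using block_covering_prefix[OF assms(2-5)] by blast
  obtain rest where rest: "mset rest = mset (map w [0..<k]) - mset x"
    using ex_mset by blast
  define w' where "w' i = (if i < k then (x @ rest) ! i else w i)" for i
  have perm: "mset (x @ rest) = mset (map w [0..<k])"
    using rest sub by (simp add: subset_mset.add_diff_inverse)
  then have len: "length (x @ rest) = k" using mset_eq_length by fastforce
  have "block_equiv k w w'"
    unfolding w'_def by (rule block_equiv_permute_first_block[OF perm])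
  moreover have "\<forall>i<length x. w' i = x ! i"
    using len by (simp add: w'_def nth_append)
  moreover have "set rest \<subseteq> I"
  proof
    fix a assume "a \<in> set rest"
    then have "count (mset rest) a \<noteq> 0" by simp
    moreover have "count (mset rest) a = count_list (map w [0..<k]) a - count_list x a"
      using arg_cong[of _ _ "\<lambda>M. count M a", OF rest] unfolding count_diff count_mset .
    ultimately show "a \<in> I" using rare_k by auto
  qed
  then have "\<forall>i\<ge>length x. w' i \<in> I"
    using len tail by (auto simp: w'_def nth_append)
  moreover have "inf_letters w' = inf_letters w"
    by (rule inf_letters_eventually_eq[of k]) (simp add: w'_def)
  moreover have "w' \<in> omega_words S"
  proof -
    have "set (x @ rest) \<subseteq> S"
      using w mset_eq_setD[OF perm] unfolding omega_words_def by auto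
    then show ?thesis
      using w len unfolding omega_words_def w'_def by (auto simp del: set_append)
  qed
  ultimately show thesis using that \<open>k \<ge> 1\<close> occ by auto
qed

section \<open>Lasso-shaped runs\<close>

definition lasso :: "nat \<Rightarrow> (nat \<Rightarrow> 'b) \<Rightarrow> nat \<Rightarrow> (nat \<Rightarrow> 'b) \<Rightarrow> nat \<Rightarrow> 'b" where
  "lasso m x n y i = (if i < m then x i else y ((i - m) mod n))"

lemma lasso_run_step:
  assumes "0 < n" and "\<forall>t<m. (p t, x t, p (Suc t)) \<in> T" and "p m = qs 0" and "qs n = qs 0"
    and "\<forall>j<n. (qs j, ys j, qs (Suc j)) \<in> T"
  shows "(lasso m p n qs i, lasso m x n ys i, lasso m p n qs (Suc i)) \<in> T"
proof (cases "i < m")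
  case True
  then consider "Suc i < m" | "Suc i = m" by linarith
  then show ?thesis
  proof cases
    case 2
    then show ?thesis using True assms(2,3) by (auto simp: lasso_def)
  qed (use True assms(2) in \<open>simp add: lasso_def\<close>)
next
  case False
  define j where "j = (i - m) mod n"
  have "j < n" using assms(1) by (simp add: j_def)
  have "(Suc i - m) mod n = (if Suc j = n then 0 else Suc j)"
    using False by (simp add: j_def mod_Suc Suc_diff_le)
  then have "lasso m p n qs (Suc i) = qs (Suc j)"
    using False assms(4) by (auto simp: lasso_def)
  moreover have "lasso m p n qs i = qs j" "lasso m x n ys i = ys j"
    using False by (simp_all add: lasso_def j_def)
  ultimately show ?thesis using assms(5) \<open>j < n\<close> by simp
qed

lemma lasso_infinite_occurrences:
  assumes "0 < n" and "j < n"
  shows "infinite {i. lasso m x n y i = y j}"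
  unfolding infinite_nat_iff_unbounded_le
proof
  fix N
  have "lasso m x n y (m + N * n + j) = y j" using assms by (simp add: lasso_def)
  moreover have "N \<le> N * n" using assms(1) by simp
  then have "N \<le> m + N * n + j" by linarith
  ultimately show "\<exists>i\<ge>N. i \<in> {i. lasso m x n y i = y j}" by blast
qed

definition accepting_cycle :: "('q, 'a) nba \<Rightarrow> 'q \<Rightarrow> 'a set \<Rightarrow> bool" where
  "accepting_cycle A q I \<longleftrightarrow> q \<in> accepting A \<and> (\<exists>n ys qs. 0 < n \<and> qs 0 = q \<and> qs n = q \<and>
      (\<forall>j<n. (qs j, ys j, qs (Suc j)) \<in> trans A) \<and> I = ys ` {..<n})"

lemma accepting_cycle_lasso_word:
  assumes wf: "nba_wf A" and cyc: "accepting_cycle A q I"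
    and p0: "p 0 \<in> initial A" and steps: "\<forall>t<m. (p t, x t, p (Suc t)) \<in> trans A" and "p m = q"
    and x: "\<forall>t<m. x t \<in> alphabet A"
  obtains u where "u \<in> nba_lang A" and "\<forall>i<m. u i = x i" and "\<forall>i\<ge>m. u i \<in> I"
    and "I \<subseteq> inf_letters u"
proof -
  obtain n ys qs where n: "0 < n" and q: "qs 0 = q" "qs n = q"
    and cycle: "\<forall>j<n. (qs j, ys j, qs (Suc j)) \<in> trans A" and I: "I = ys ` {..<n}"
    and acc: "q \<in> accepting A"
    using cyc unfolding accepting_cycle_def by blast
  define u where "u = lasso m x n ys"
  define r where "r = lasso m p n qs"
  have "ys j \<in> alphabet A" if "j < n" for j
    using cycle that wf unfolding nba_wf_def by blast
  then have "u \<in> omega_words (alphabet A)"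
    using x n unfolding omega_words_def u_def lasso_def by auto
  moreover have "r 0 \<in> initial A"
    using p0 \<open>p m = q\<close> q unfolding r_def lasso_def by (cases m) auto
  moreover have "\<forall>i. (r i, u i, r (Suc i)) \<in> trans A"
    using lasso_run_step[OF n steps] \<open>p m = q\<close> q cycle unfolding r_def u_def by simp
  moreover have "infinite {i. r i \<in> accepting A}"
  proof (rule infinite_super)
    show "infinite {i. r i = qs 0}"
      using lasso_infinite_occurrences[OF n n, of m p qs] q unfolding r_def by simp
  qed (use acc q in auto)
  ultimately have "u \<in> nba_lang A" unfolding nba_lang_def by blast
  moreover have "\<forall>i\<ge>m. u i \<in> I" using n unfolding u_def lasso_def I by auto
  moreover have "I \<subseteq> inf_letters u"
    using lasso_infinite_occurrences[OF n] unfolding I u_def inf_letters_def by auto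
  ultimately show thesis using that unfolding u_def lasso_def by simp
qed

lemma accepting_cycleI:
  assumes run: "\<forall>t. (r t, u t, r (Suc t)) \<in> trans A" and "m < m'"
    and "r m = q" and "r m' = q" and "q \<in> accepting A"
  shows "accepting_cycle A q (u ` {m..<m'})"
proof -
  have "u ` {m..<m'} = (\<lambda>j. u (m + j)) ` {..<m' - m}"
  proof
    show "u ` {m..<m'} \<subseteq> (\<lambda>j. u (m + j)) ` {..<m' - m}"
    proof
      fix y assume "y \<in> u ` {m..<m'}"
      then obtain i where "m \<le> i" "i < m'" "y = u i" by auto
      then show "y \<in> (\<lambda>j. u (m + j)) ` {..<m' - m}" by (intro image_eqI[of _ _ "i - m"]) auto
    qed
  qed auto
  moreover have "\<forall>j<m' - m. (r (m + j), u (m + j), r (m + Suc j)) \<in> trans A"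
    using run by simp
  ultimately show ?thesis
    unfolding accepting_cycle_def using assms(2-5)
    by (intro conjI exI[of _ "m' - m"] exI[of _ "\<lambda>j. u (m + j)"] exI[of _ "\<lambda>j. r (m + j)"]) auto
qed

lemma nba_lang_accepting_cycle:
  assumes wf: "nba_wf A" and "u \<in> nba_lang A"
  obtains r m where "r 0 \<in> initial A" and "\<forall>t. (r t, u t, r (Suc t)) \<in> trans A"
    and "accepting_cycle A (r m) (inf_letters u)" and "\<forall>i\<ge>m. u i \<in> inf_letters u"
proof -
  obtain r where u: "u \<in> omega_words (alphabet A)" and r0: "r 0 \<in> initial A"
    and run: "\<forall>t. (r t, u t, r (Suc t)) \<in> trans A" and acc: "infinite {i. r i \<in> accepting A}"
    using assms(2) unfolding nba_lang_def by blast
  have fin: "finite (alphabet A)" "finite (accepting A)"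
    using wf unfolding nba_wf_def by (auto intro: finite_subset)
  obtain N0 where N0: "\<forall>i\<ge>N0. u i \<in> inf_letters u"
    using finite_nat_set_eventually_not[OF finite_not_inf_letters[OF u fin(1)]] by auto
  obtain q where q: "q \<in> accepting A" and "infinite {i \<in> {i. r i \<in> accepting A}. r i = q}"
    using pigeonhole_infinite_rel[OF acc fin(2), of "\<lambda>i q. r i = q"] by blast
  moreover have "{i \<in> {i. r i \<in> accepting A}. r i = q} = {i. r i = q}" using q by auto
  ultimately have "infinite {i. r i = q}" by simp
  then have visits: "\<exists>i\<ge>n. r i = q" for n
    unfolding infinite_nat_iff_unbounded_le by blast
  obtain m where m: "m \<ge> N0" "r m = q" using visits by blast
  have "finite (inf_letters u)"
    using inf_letters_subset[OF u] fin(1) by (rule finite_subset)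
  then obtain N where N: "\<forall>a\<in>inf_letters u. \<exists>i. m \<le> i \<and> i < N \<and> u i = a"
    using occurrences_within_window subset_refl by blast
  obtain m' where m': "m' \<ge> max N (Suc m)" "r m' = q" using visits by blast
  have "u ` {m..<m'} = inf_letters u"
  proof
    show "u ` {m..<m'} \<subseteq> inf_letters u" using N0 m by auto
    show "inf_letters u \<subseteq> u ` {m..<m'}"
    proof
      fix a assume "a \<in> inf_letters u"
      then obtain i where "m \<le> i" "i < N" "u i = a" using N by blast
      with m' show "a \<in> u ` {m..<m'}" by force
    qed
  qed
  then have "accepting_cycle A (r m) (inf_letters u)"
    using accepting_cycleI[OF run _ m(2) m'(2) q] m' m by fastforce
  with r0 run N0 m(1) show thesis using that by auto
qed

section \<open>Collecting letters with resets\<close>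

definition reset_step :: "'a set \<Rightarrow> 'a set \<Rightarrow> 'a \<Rightarrow> 'a set" where
  "reset_step I S b = (if insert b S = I then {} else insert b S)"

primrec reset_run :: "'a set \<Rightarrow> (nat \<Rightarrow> 'a) \<Rightarrow> nat \<Rightarrow> 'a set" where
  "reset_run I v 0 = {}"
| "reset_run I v (Suc j) = reset_step I (reset_run I v j) (v j)"

lemma reset_run_subset: "\<forall>j. v j \<in> I \<Longrightarrow> reset_run I v j \<subseteq> I"
  by (induction j) (auto simp: reset_step_def)

lemma reset_step_subset: "reset_step I S b \<subseteq> insert b S"
  unfolding reset_step_def by auto

lemma infinite_resets_imp_inf_letters:
  assumes resets: "infinite {j. reset_run I v j = {}}"
  shows "I \<subseteq> inf_letters v"
proof (rule subsetI, rule ccontr)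
  fix a assume "a \<in> I" and "a \<notin> inf_letters v"
  then have "finite {j. v j = a}" unfolding inf_letters_def by simp
  then obtain T0 where T0: "\<forall>j\<ge>T0. v j \<noteq> a"
    by (rule finite_nat_set_eventually_not)
  obtain T where T: "T \<ge> T0" "reset_run I v T = {}"
    using resets unfolding infinite_nat_iff_unbounded_le by blast
  \<comment> \<open>after \<open>T0\<close> the letter \<open>a \<in> I\<close> is never collected, so no reset can happen\<close>
  have step: "a \<notin> reset_run I v (Suc j) \<and> reset_run I v (Suc j) \<noteq> {}"
    if "a \<notin> reset_run I v j" and "j \<ge> T0" for j
  proof -
    have "v j \<noteq> a" using T0 that(2) by simp
    then have "insert (v j) (reset_run I v j) \<noteq> I" using that(1) \<open>a \<in> I\<close> by (metis insert_iff)
    with \<open>v j \<noteq> a\<close> that(1) show ?thesis by (simp add: reset_step_def)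
  qed
  have "a \<notin> reset_run I v (T + n)" for n
    by (induction n) (use T step in auto)
  then have "reset_run I v (Suc (T + n)) \<noteq> {}" for n
    using step T by simp
  then have "{j. reset_run I v j = {}} \<subseteq> {..T}"
    by (metis (mono_tags) atMost_iff less_imp_Suc_add mem_Collect_eq not_le subsetI)
  with resets show False using finite_subset by blast
qed

lemma inf_letters_imp_infinite_resets:
  assumes "finite I" and vI: "\<forall>j. v j \<in> I" and occ: "I \<subseteq> inf_letters v"
  shows "infinite {j. reset_run I v j = {}}"
proof
  assume "finite {j. reset_run I v j = {}}"
  then obtain T where T: "\<forall>j\<ge>T. reset_run I v j \<noteq> {}"
    by (rule finite_nat_set_eventually_not)
  then have grow: "reset_run I v (Suc j) = insert (v j) (reset_run I v j)
      \<and> insert (v j) (reset_run I v j) \<noteq> I" if "j \<ge> T" for j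
    using that T[rule_format, of "Suc j"] by (auto simp: reset_step_def split: if_splits)
  have mono: "reset_run I v i \<subseteq> reset_run I v (i + d)" if "i \<ge> T" for i d
    by (induction d) (use grow that in auto)
  obtain N where N: "\<forall>a\<in>I. \<exists>i. T \<le> i \<and> i < N \<and> v i = a"
    using occurrences_within_window[OF assms(1) occ] .
  have "I \<subseteq> reset_run I v (T + N)"
  proof
    fix a assume "a \<in> I"
    then obtain i where i: "T \<le> i" "i < N" "v i = a" using N by blast
    then have "a \<in> reset_run I v (Suc i)" using grow[of i] by simp
    also have "\<dots> \<subseteq> reset_run I v (Suc i + (T + N - Suc i))"
      using mono i(1) le_SucI by blast
    also have "Suc i + (T + N - Suc i) = T + N" using i(2) by simp
    finally show "a \<in> reset_run I v (T + N)" .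
  qed
  then have "reset_run I v (T + N) = I" using reset_run_subset[OF vI] by blast
  then show False using grow[of "T + N"] vI by (simp add: insert_absorb)
qed

section \<open>The lasso automaton\<close>

definition lasso_nba :: "('q, 'a) nba \<Rightarrow> ('q + 'a set \<times> 'a set, 'a) nba" where
  "lasso_nba A = \<lparr>alphabet = alphabet A,
     states = Inl ` states A \<union> Inr ` (Pow (alphabet A) \<times> Pow (alphabet A)),
     initial = Inl ` initial A,
     trans = {(Inl p, b, Inl p') | p b p'. (p, b, p') \<in> trans A}
       \<union> {(Inl q, b, Inr (I, reset_step I {} b)) | q b I.
            accepting_cycle A q I \<and> I \<subseteq> alphabet A \<and> b \<in> I}
       \<union> {(Inr (I, S), b, Inr (I, reset_step I S b)) | I S b.
            I \<subseteq> alphabet A \<and> S \<subseteq> alphabet A \<and> b \<in> I},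
     accepting = Inr ` (Pow (alphabet A) \<times> {{}})\<rparr>"

lemma lasso_nba_trans_iff:
  "(x, b, y) \<in> trans (lasso_nba A) \<longleftrightarrow>
     (\<exists>p p'. x = Inl p \<and> y = Inl p' \<and> (p, b, p') \<in> trans A)
   \<or> (\<exists>q I. x = Inl q \<and> y = Inr (I, reset_step I {} b) \<and> accepting_cycle A q I
        \<and> I \<subseteq> alphabet A \<and> b \<in> I)
   \<or> (\<exists>I S. x = Inr (I, S) \<and> y = Inr (I, reset_step I S b)
        \<and> I \<subseteq> alphabet A \<and> S \<subseteq> alphabet A \<and> b \<in> I)"
  unfolding lasso_nba_def by auto

lemma nba_wf_lasso_nba:
  assumes "nba_wf A"
  shows "nba_wf (lasso_nba A)"
proof -
  have "finite (states (lasso_nba A))"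
    using assms by (simp add: nba_wf_def lasso_nba_def)
  moreover have "trans (lasso_nba A) \<subseteq>
      states (lasso_nba A) \<times> alphabet (lasso_nba A) \<times> states (lasso_nba A)"
  proof
    fix t assume "t \<in> trans (lasso_nba A)"
    moreover obtain x b y where t: "t = (x, b, y)" by (cases t)
    moreover have "q \<in> states A" if "accepting_cycle A q I" for q I
      using that assms unfolding accepting_cycle_def nba_wf_def by blast
    moreover have "reset_step I S b \<subseteq> alphabet A" if "I \<subseteq> alphabet A" "S \<subseteq> alphabet A" "b \<in> I"
      for I S b
      using that reset_step_subset[of I S b] by blast
    ultimately show "t \<in> states (lasso_nba A) \<times> alphabet (lasso_nba A) \<times> states (lasso_nba A)"
      using assms unfolding t lasso_nba_trans_iff nba_wf_def
      by (auto simp: lasso_nba_def)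
  qed
  ultimately show ?thesis using assms unfolding nba_wf_def by (auto simp: lasso_nba_def)
qed

lemma lasso_nba_run_after_jump:
  assumes run: "\<forall>i. (R i, w i, R (Suc i)) \<in> trans (lasso_nba A)"
    and "R m = Inl q" and "R (Suc m) \<notin> range Inl"
  obtains I where "accepting_cycle A q I" and "\<forall>j. w (m + j) \<in> I"
    and "\<forall>j. R (m + Suc j) = Inr (I, reset_run I (\<lambda>j. w (m + j)) (Suc j))"
proof -
  obtain I where I: "accepting_cycle A q I" "w m \<in> I"
    and jump: "R (Suc m) = Inr (I, reset_step I {} (w m))"
    using run[rule_format, of m] assms(2,3) unfolding lasso_nba_trans_iff by auto
  have "w (m + j) \<in> I \<and> R (m + Suc j) = Inr (I, reset_run I (\<lambda>j. w (m + j)) (Suc j))" for j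
  proof (induction j)
    case 0
    show ?case using I jump by simp
  next
    case (Suc j)
    then show ?case
      using run[rule_format, of "m + Suc j"] unfolding lasso_nba_trans_iff by auto
  qed
  with I show thesis using that by blast
qed

lemma lasso_nba_langE:
  assumes "w \<in> nba_lang (lasso_nba A)"
  obtains p m I where "p 0 \<in> initial A" and "\<forall>t<m. (p t, w t, p (Suc t)) \<in> trans A"
    and "accepting_cycle A (p m) I" and "\<forall>j. w (m + j) \<in> I"
    and "infinite {j. reset_run I (\<lambda>j. w (m + j)) j = {}}"
proof -
  obtain R where R0: "R 0 \<in> Inl ` initial A"
    and run: "\<forall>i. (R i, w i, R (Suc i)) \<in> trans (lasso_nba A)"
    and acc: "infinite {i. R i \<in> Inr ` (Pow (alphabet A) \<times> {{}})}"
    using assms unfolding nba_lang_def by (auto simp: lasso_nba_def)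
  have "\<exists>t. R t \<notin> range Inl"
    using not_finite_existsD[OF acc] by (metis Inl_Inr_False image_iff mem_Collect_eq)
  define n where "n = (LEAST t. R t \<notin> range Inl)"
  have Rn: "R n \<notin> range Inl"
    unfolding n_def using \<open>\<exists>t. R t \<notin> range Inl\<close> by (rule LeastI_ex)
  then obtain m where n: "n = Suc m" using R0 by (cases n) auto
  define p where "p t = projl (R t)" for t
  have Rp: "R t = Inl (p t)" if "t \<le> m" for t
    using not_less_Least[of t "\<lambda>t. R t \<notin> range Inl"] that n unfolding p_def n_def by auto
  obtain I where I: "accepting_cycle A (p m) I" "\<forall>j. w (m + j) \<in> I"
    and phase2: "\<forall>j. R (m + Suc j) = Inr (I, reset_run I (\<lambda>j. w (m + j)) (Suc j))"
    using lasso_nba_run_after_jump[OF run Rp[of m]] Rn n by auto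
  have "p 0 \<in> initial A" using R0 Rp[of 0] by auto
  moreover have "\<forall>t<m. (p t, w t, p (Suc t)) \<in> trans A"
  proof (intro allI impI)
    fix t assume "t < m"
    then show "(p t, w t, p (Suc t)) \<in> trans A"
      using run[rule_format, of t] Rp[of t] Rp[of "Suc t"] unfolding lasso_nba_trans_iff by auto
  qed
  moreover have "infinite {j. reset_run I (\<lambda>j. w (m + j)) j = {}}"
  proof (rule infinite_super)
    show "infinite {j. R (m + j) \<in> Inr ` (Pow (alphabet A) \<times> {{}})}"
      using acc finite_shift_iff[of "\<lambda>t. R t \<in> Inr ` (Pow (alphabet A) \<times> {{}})" m] by simp
    show "{j. R (m + j) \<in> Inr ` (Pow (alphabet A) \<times> {{}})}
        \<subseteq> {j. reset_run I (\<lambda>j. w (m + j)) j = {}}"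
    proof
      fix j assume j: "j \<in> {j. R (m + j) \<in> Inr ` (Pow (alphabet A) \<times> {{}})}"
      then show "j \<in> {j. reset_run I (\<lambda>j. w (m + j)) j = {}}"
        using Rp[of m] phase2 by (cases j) auto
    qed
  qed
  ultimately show thesis using I that by blast
qed

lemma lasso_nba_parikh_sound:
  assumes wf: "nba_wf A" and "w \<in> nba_lang (lasso_nba A)"
  obtains u where "u \<in> nba_lang A" and "parikh_inf u = parikh_inf w"
proof -
  obtain p m I where p0: "p 0 \<in> initial A" and steps: "\<forall>t<m. (p t, w t, p (Suc t)) \<in> trans A"
    and cyc: "accepting_cycle A (p m) I" and suffix: "\<forall>j. w (m + j) \<in> I"
    and resets: "infinite {j. reset_run I (\<lambda>j. w (m + j)) j = {}}"
    using lasso_nba_langE[OF assms(2)] by blast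
  have "I \<subseteq> inf_letters w"
    using infinite_resets_imp_inf_letters[OF resets] inf_letters_shift by metis
  have "\<forall>t<m. w t \<in> alphabet A"
    using assms(2) unfolding nba_lang_def omega_words_def by (simp add: lasso_nba_def)
  then obtain u where "u \<in> nba_lang A" "\<forall>i<m. u i = w i" "\<forall>i\<ge>m. u i \<in> I" "I \<subseteq> inf_letters u"
    by (rule accepting_cycle_lasso_word[OF wf cyc p0 steps refl])
  moreover have "\<forall>i\<ge>m. w i \<in> I"
    using suffix by (metis le_add_diff_inverse)
  ultimately show thesis
    using that parikh_inf_eq_if_same_prefix[of m u w I] \<open>I \<subseteq> inf_letters w\<close> by blast
qed

definition lasso_nba_run :: "(nat \<Rightarrow> 'q) \<Rightarrow> nat \<Rightarrow> 'a set \<Rightarrow> (nat \<Rightarrow> 'a) \<Rightarrow> nat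
    \<Rightarrow> 'q + 'a set \<times> 'a set" where
  "lasso_nba_run p m I w t =
     (if t \<le> m then Inl (p t) else Inr (I, reset_run I (\<lambda>j. w (m + j)) (t - m)))"

lemma lasso_nba_run_step:
  assumes cyc: "accepting_cycle A q I" and "I \<subseteq> alphabet A"
    and steps: "\<forall>t<m. (p t, w t, p (Suc t)) \<in> trans A" and "p m = q"
    and suffix: "\<forall>i\<ge>m. w i \<in> I"
  shows "(lasso_nba_run p m I w t, w t, lasso_nba_run p m I w (Suc t)) \<in> trans (lasso_nba A)"
proof -
  let ?v = "\<lambda>j. w (m + j)"
  consider "t < m" | "t = m" | "t > m" by linarith
  then show ?thesis
  proof cases
    case 1
    then show ?thesis using steps unfolding lasso_nba_run_def lasso_nba_trans_iff by auto
  next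
    case 2
    then show ?thesis
      using cyc \<open>I \<subseteq> alphabet A\<close> suffix \<open>p m = q\<close>
      unfolding lasso_nba_run_def lasso_nba_trans_iff by auto
  next
    case 3
    then have "lasso_nba_run p m I w (Suc t) = Inr (I, reset_step I (reset_run I ?v (t - m)) (w t))"
      by (simp add: lasso_nba_run_def Suc_diff_le)
    moreover have "reset_run I ?v (t - m) \<subseteq> alphabet A"
      using reset_run_subset[of ?v I] suffix \<open>I \<subseteq> alphabet A\<close> by auto
    ultimately show ?thesis
      using 3 suffix \<open>I \<subseteq> alphabet A\<close>
      unfolding lasso_nba_trans_iff by (simp add: lasso_nba_run_def)
  qed
qed

lemma lasso_nba_langI:
  assumes wf: "nba_wf A" and cyc: "accepting_cycle A q I" and "I \<subseteq> alphabet A"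
    and w: "w \<in> omega_words (alphabet A)" and p0: "p 0 \<in> initial A"
    and steps: "\<forall>t<m. (p t, w t, p (Suc t)) \<in> trans A" and "p m = q"
    and suffix: "\<forall>i\<ge>m. w i \<in> I" and occ: "I \<subseteq> inf_letters w"
  shows "w \<in> nba_lang (lasso_nba A)"
proof -
  let ?v = "\<lambda>j. w (m + j)"
  let ?R = "lasso_nba_run p m I w"
  have "finite I" using \<open>I \<subseteq> alphabet A\<close> wf unfolding nba_wf_def by (blast intro: finite_subset)
  have vI: "\<forall>j. ?v j \<in> I" using suffix by simp
  have "infinite {j. reset_run I ?v j = {}}"
    using inf_letters_imp_infinite_resets[OF \<open>finite I\<close> vI] occ inf_letters_shift by metis
  moreover have "{j. reset_run I ?v j = {}} \<subseteq> insert 0 {j. ?R (m + j) \<in> accepting (lasso_nba A)}"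
    using \<open>I \<subseteq> alphabet A\<close> by (auto simp: lasso_nba_run_def lasso_nba_def)
  ultimately have "infinite {j. ?R (m + j) \<in> accepting (lasso_nba A)}"
    using finite_subset by blast
  then have "infinite {t. ?R t \<in> accepting (lasso_nba A)}"
    using finite_shift_iff[of "\<lambda>t. ?R t \<in> accepting (lasso_nba A)" m] by simp
  moreover have "?R 0 \<in> initial (lasso_nba A)"
    using p0 by (simp add: lasso_nba_run_def lasso_nba_def)
  ultimately show ?thesis
    using w lasso_nba_run_step[OF cyc \<open>I \<subseteq> alphabet A\<close> steps \<open>p m = q\<close> suffix]
    unfolding nba_lang_def by (auto simp: lasso_nba_def)
qed

lemma J_ex_box_lasso_nba_subset_J:
  assumes "nba_wf A"
  shows "J_ex_box (lasso_nba A) \<subseteq> J A"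
proof
  fix w assume "w \<in> J_ex_box (lasso_nba A)"
  then obtain k w' where w: "w \<in> omega_words (alphabet A)" and "k \<ge> 1"
    and "block_equiv k w w'" and "w' \<in> nba_lang (lasso_nba A)"
    unfolding J_ex_box_def by (auto simp: lasso_nba_def)
  moreover obtain u where "u \<in> nba_lang A" and "parikh_inf u = parikh_inf w'"
    using lasso_nba_parikh_sound[OF assms \<open>w' \<in> nba_lang (lasso_nba A)\<close>] .
  ultimately show "w \<in> J A"
    unfolding J_def using block_equiv_parikh_inf by fastforce
qed

lemma J_subset_J_ex_box_lasso_nba:
  assumes wf: "nba_wf A"
  shows "J A \<subseteq> J_ex_box (lasso_nba A)"
proof
  fix w assume "w \<in> J A"
  then obtain u where w: "w \<in> omega_words (alphabet A)" and u: "u \<in> nba_lang A"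
    and parikh: "parikh_inf u = parikh_inf w"
    unfolding J_def by blast
  obtain r m where r0: "r 0 \<in> initial A" and run: "\<forall>t. (r t, u t, r (Suc t)) \<in> trans A"
    and cyc: "accepting_cycle A (r m) (inf_letters u)" and tail: "\<forall>i\<ge>m. u i \<in> inf_letters u"
    using nba_lang_accepting_cycle[OF wf u] by blast
  let ?I = "inf_letters w"
  have I: "inf_letters u = ?I" using parikh_inf_eqD(1)[OF parikh] .
  have "finite (alphabet A)" using wf unfolding nba_wf_def by blast
  then have fin: "finite ?I" "finite {i. w i \<notin> ?I}" and "?I \<subseteq> alphabet A"
    using inf_letters_subset[OF w] finite_not_inf_letters[OF w] by (auto intro: finite_subset)
  \<comment> \<open>a letter outside \<open>?I\<close> occurs in \<open>u\<close> only before \<open>m\<close>\<close>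
  have "count_list (map u [0..<m]) a = card {i. w i = a}" if "a \<notin> ?I" for a
  proof -
    have "{i. i < m \<and> u i = a} = {i. u i = a}" using tail that I by (auto simp: not_le[symmetric])
    then show ?thesis using parikh_inf_eqD(2)[OF parikh that] by (simp add: count_list_map_upt)
  qed
  then obtain k w' where "k \<ge> 1" and "block_equiv k w w'" and prefix: "\<forall>i<m. w' i = u i"
    and suffix: "\<forall>i\<ge>m. w' i \<in> ?I" and "?I \<subseteq> inf_letters w'"
    and "w' \<in> omega_words (alphabet A)"
    using block_rearrangement[OF w fin(1) subset_refl fin(2), of "map u [0..<m]"] by auto
  moreover have "w' \<in> nba_lang (lasso_nba A)"
    using lasso_nba_langI[OF wf cyc[unfolded I] \<open>?I \<subseteq> alphabet A\<close>
        \<open>w' \<in> omega_words (alphabet A)\<close> r0 _ refl suffix \<open>?I \<subseteq> inf_letters w'\<close>]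
      run prefix by simp
  ultimately show "w \<in> J_ex_box (lasso_nba A)"
    using w unfolding J_ex_box_def by (auto simp: lasso_nba_def)
qed

section \<open>Renaming states\<close>

definition nba_rename :: "('q \<Rightarrow> 'r) \<Rightarrow> ('q, 'a) nba \<Rightarrow> ('r, 'a) nba" where
  "nba_rename f A = \<lparr>alphabet = alphabet A, states = f ` states A, initial = f ` initial A,
     trans = (\<lambda>(p, a, p'). (f p, a, f p')) ` trans A, accepting = f ` accepting A\<rparr>"

lemma nba_wf_rename: "nba_wf A \<Longrightarrow> nba_wf (nba_rename f A)"
  unfolding nba_wf_def nba_rename_def by auto

lemma nba_lang_subset_rename: "nba_lang A \<subseteq> nba_lang (nba_rename f A)"
proof
  fix w assume "w \<in> nba_lang A"
  then obtain r where w: "w \<in> omega_words (alphabet A)" and r0: "r 0 \<in> initial A"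
    and run: "\<forall>i. (r i, w i, r (Suc i)) \<in> trans A" and acc: "infinite {i. r i \<in> accepting A}"
    unfolding nba_lang_def by blast
  have "(f (r i), w i, f (r (Suc i))) \<in> trans (nba_rename f A)" for i
    using run unfolding nba_rename_def by force
  moreover have "infinite {i. f (r i) \<in> accepting (nba_rename f A)}"
    using acc by (rule infinite_super[rotated]) (auto simp: nba_rename_def)
  ultimately show "w \<in> nba_lang (nba_rename f A)"
    using w r0 unfolding nba_lang_def by (auto simp: nba_rename_def)
qed

lemma nba_lang_rename_subset:
  assumes wf: "nba_wf A" and inj: "inj_on f (states A)"
  shows "nba_lang (nba_rename f A) \<subseteq> nba_lang A"
proof
  fix w assume "w \<in> nba_lang (nba_rename f A)"
  then obtain r where w: "w \<in> omega_words (alphabet A)" and r0: "r 0 \<in> f ` initial A"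
    and run: "\<forall>i. (r i, w i, r (Suc i)) \<in> (\<lambda>(p, a, p'). (f p, a, f p')) ` trans A"
    and acc: "infinite {i. r i \<in> f ` accepting A}"
    unfolding nba_lang_def by (auto simp: nba_rename_def)
  define g where "g = inv_into (states A) f"
  have gf: "g (f p) = p" if "p \<in> states A" for p
    using inj that unfolding g_def by simp
  have "(g (r i), w i, g (r (Suc i))) \<in> trans A" for i
  proof -
    obtain p p' where "(p, w i, p') \<in> trans A" "r i = f p" "r (Suc i) = f p'"
      using run[rule_format, of i] by auto
    moreover have "p \<in> states A" "p' \<in> states A" using calculation(1) wf unfolding nba_wf_def by auto
    ultimately show ?thesis using gf by simp
  qed
  moreover have "g (r 0) \<in> initial A"
    using r0 gf wf unfolding nba_wf_def by auto
  moreover have "infinite {i. g (r i) \<in> accepting A}"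
    using acc by (rule infinite_super[rotated]) (use gf wf in \<open>auto simp: nba_wf_def\<close>)
  ultimately show "w \<in> nba_lang A"
    using w unfolding nba_lang_def by (intro CollectI conjI exI[of _ "\<lambda>i. g (r i)"]) auto
qed

lemma nba_equivalent_nat_states:
  fixes B :: "('q, 'a) nba"
  assumes "nba_wf B"
  obtains B' :: "(nat, 'a) nba"
  where "nba_wf B'" and "alphabet B' = alphabet B" and "nba_lang B' = nba_lang B"
proof -
  obtain f :: "'q \<Rightarrow> nat" where "inj_on f (states B)"
    using assms finite_imp_inj_to_nat_seg[of "states B"] unfolding nba_wf_def by blast
  then show thesis
    using nba_lang_subset_rename[of B f] nba_lang_rename_subset[OF assms]
    by (intro that[of "nba_rename f B"] nba_wf_rename[OF assms]) (auto simp: nba_rename_def)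
qed

lemma J_ex_box_cong:
  "alphabet B = alphabet C \<Longrightarrow> nba_lang B = nba_lang C \<Longrightarrow> J_ex_box B = J_ex_box C"
  unfolding J_ex_box_def by simp

theorem theorem4:
  fixes A :: "('q, 'a) nba"
  assumes "nba_wf A"
  shows "\<exists>B :: (nat, 'a) nba. nba_wf B \<and> alphabet B = alphabet A \<and> J_ex_box B = J A"
proof -
  obtain B :: "(nat, 'a) nba" where "nba_wf B" and alph: "alphabet B = alphabet (lasso_nba A)"
    and lang: "nba_lang B = nba_lang (lasso_nba A)"
    using nba_equivalent_nat_states[OF nba_wf_lasso_nba[OF assms]] by blast
  from alph lang have "J_ex_box B = J_ex_box (lasso_nba A)" by (rule J_ex_box_cong)
  also have "\<dots> = J A"
    using J_ex_box_lasso_nba_subset_J[OF assms] J_subset_J_ex_box_lasso_nba[OF assms] by blast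
  finally show ?thesis using \<open>nba_wf B\<close> alph by (auto simp: lasso_nba_def)
qed

end
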